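(* Let $P\in\Delta$ be such that the marginal distribution $p$ of $X$ has full support on $\mathcal X$. Then $\widetilde{UI}(X:Z\setminus Y)=0$ if and only if $Z$ has no unique information about $X$ with respect to $Y$, i.e. if and only if for every finite set $\mathcal A$ and every function $u:\mathcal X\times\mathcal A\to\mathbb R$ one has $R(\kappa,p,u)\ge R(\mu,p,u)$.
   Context: $X,Y,Z$ are random variables with finite state spaces $\mathcal X,\mathcal Y,\mathcal Z$ and joint distribution $P\in\Delta$, where $\Delta$ is the set of probability distributions on $\mathcal X\times\mathcal Y\times\mathcal Z$. $\Delta_P=\{Q\in\Delta: Q(X=x,Y=y)=P(X=x,Y=y)\text{ and }Q(X=x,Z=z)=P(X=x,Z=z)\ \forall x,y,z\}$, and $\widetilde{UI}(X:Z\setminus Y)=\min_{Q\in\Delta_P}MI_Q(X:Z|Y)$ (mutual information computed w.r.t. $Q$). Let $p(x)=P(X=x)$, and let $\kappa(x;y)=P(Y=y|X=x)$, $\mu(x;z)=P(Z=z|X=x)$ be the row-stochastic channel matrices. A decision problem consists of a finite action set $\mathcal A$ and a reward function $u:\mathcal X\times\mathcal A\to\mathbb R$. For a channel $\nu\in[0,1]^{\mathcal X\times\mathcal W}$ (to a finite set $\mathcal W$), the maximal expected reward is $R(\nu,p,u)=\sum_{w\in\mathcal W}\max_{a\in\mathcal A}\sum_{x\in\mathcal X}p(x)\nu(x;w)u(x,a)$, i.e. the expected reward of an agent who observes the output $w$ of the channel and then chooses an action maximizing the posterior expected reward $\sum_x P(X=x|W=w)u(x,a)$. *)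

theory Defs
  imports "HOL-Analysis.Analysis"
begin

definition is_dist :: "('x::finite \<Rightarrow> 'y::finite \<Rightarrow> 'z::finite \<Rightarrow> real) \<Rightarrow> bool" where
  "is_dist P \<longleftrightarrow> (\<forall>x y z. 0 \<le> P x y z) \<and> (\<Sum>x\<in>UNIV. \<Sum>y\<in>UNIV. \<Sum>z\<in>UNIV. P x y z) = 1"

definition margXY :: "('x::finite \<Rightarrow> 'y::finite \<Rightarrow> 'z::finite \<Rightarrow> real) \<Rightarrow> 'x \<Rightarrow> 'y \<Rightarrow> real" where
  "margXY P x y = (\<Sum>z\<in>UNIV. P x y z)"

definition margXZ :: "('x::finite \<Rightarrow> 'y::finite \<Rightarrow> 'z::finite \<Rightarrow> real) \<Rightarrow> 'x \<Rightarrow> 'z \<Rightarrow> real" where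
  "margXZ P x z = (\<Sum>y\<in>UNIV. P x y z)"

definition margYZ :: "('x::finite \<Rightarrow> 'y::finite \<Rightarrow> 'z::finite \<Rightarrow> real) \<Rightarrow> 'y \<Rightarrow> 'z \<Rightarrow> real" where
  "margYZ P y z = (\<Sum>x\<in>UNIV. P x y z)"

definition margX :: "('x::finite \<Rightarrow> 'y::finite \<Rightarrow> 'z::finite \<Rightarrow> real) \<Rightarrow> 'x \<Rightarrow> real" where
  "margX P x = (\<Sum>y\<in>UNIV. \<Sum>z\<in>UNIV. P x y z)"

definition margY :: "('x::finite \<Rightarrow> 'y::finite \<Rightarrow> 'z::finite \<Rightarrow> real) \<Rightarrow> 'y \<Rightarrow> real" where
  "margY P y = (\<Sum>x\<in>UNIV. \<Sum>z\<in>UNIV. P x y z)"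

definition DeltaP :: "('x::finite \<Rightarrow> 'y::finite \<Rightarrow> 'z::finite \<Rightarrow> real) \<Rightarrow> ('x \<Rightarrow> 'y \<Rightarrow> 'z \<Rightarrow> real) set" where
  "DeltaP P = {Q. is_dist Q \<and> margXY Q = margXY P \<and> margXZ Q = margXZ P}"

definition cond_MI :: "('x::finite \<Rightarrow> 'y::finite \<Rightarrow> 'z::finite \<Rightarrow> real) \<Rightarrow> real" where
  "cond_MI Q = (\<Sum>x\<in>UNIV. \<Sum>y\<in>UNIV. \<Sum>z\<in>UNIV.
      if Q x y z = 0 then 0
      else Q x y z * log 2 (Q x y z * margY Q y / (margXY Q x y * margYZ Q y z)))"

text \<open>UI tilde (X : Z \ Y) = min over Delta_P of MI_Q(X:Z|Y) (the minimum exists; written as Inf).\<close>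
definition UI_tilde :: "('x::finite \<Rightarrow> 'y::finite \<Rightarrow> 'z::finite \<Rightarrow> real) \<Rightarrow> real" where
  "UI_tilde P = Inf (cond_MI ` DeltaP P)"

definition kappa :: "('x::finite \<Rightarrow> 'y::finite \<Rightarrow> 'z::finite \<Rightarrow> real) \<Rightarrow> 'x \<Rightarrow> 'y \<Rightarrow> real" where
  "kappa P x y = margXY P x y / margX P x"

definition mu :: "('x::finite \<Rightarrow> 'y::finite \<Rightarrow> 'z::finite \<Rightarrow> real) \<Rightarrow> 'x \<Rightarrow> 'z \<Rightarrow> real" where
  "mu P x z = margXZ P x z / margX P x"

definition max_reward :: "'a set \<Rightarrow> ('x::finite \<Rightarrow> 'w::finite \<Rightarrow> real) \<Rightarrow> ('x \<Rightarrow> real) \<Rightarrow> ('x \<Rightarrow> 'a \<Rightarrow> real) \<Rightarrow> real" where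
  "max_reward A \<nu> p u = (\<Sum>w\<in>UNIV. Max ((\<lambda>a. \<Sum>x\<in>UNIV. p x * \<nu> x w * u x a) ` A))"

end

theory Submission
  imports Defs
begin

text \<open>Both directions pass through the \<open>(X,Z)\<close>-marginal being a garbling of the \<open>(X,Y)\<close>-marginal.
  If \<open>Q\<close> is in \<open>\<Delta>\<^sub>P\<close>, garbling \<open>Y\<close> by \<open>Q(z|y)\<close> produces the \<open>(X,Z)\<close>-marginal of the Markov chain
  \<open>X - Y - Z\<close> built from \<open>Q\<close>, which is within \<open>L\<^sup>1\<close>-distance \<open>2 \<surd>(ln 2 \<cdot> MI\<^sub>Q(X:Z|Y))\<close> of \<open>P(X,Z)\<close>
  (relative entropy dominates the squared Hellinger distance). Rewards do not increase under
  garbling and are Lipschitz in \<open>L\<^sup>1\<close>, so \<open>R(\<mu>) - R(\<kappa>) \<le> 2 \<parallel>u\<parallel>\<^sub>\<infinity> \<surd>(ln 2 \<cdot> MI\<^sub>Q(X:Z|Y))\<close> for every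
  \<open>Q \<in> \<Delta>\<^sub>P\<close>; this quantitative form is needed because the infimum is not known to be attained.
  Conversely, if \<open>P(X,Z)\<close> is a garbling of \<open>P(X,Y)\<close> by a channel \<open>\<lambda>\<close>, then
  \<open>Q(x,y,z) = P(x,y) \<lambda>(y;z)\<close> lies in \<open>\<Delta>\<^sub>P\<close> and is Markov, so \<open>MI\<^sub>Q(X:Z|Y) = 0\<close>; if it is not, a
  hyperplane separating it from the convex hull of the deterministic garblings is a reward
  function on the action set \<open>Z\<close> for which \<open>Z\<close> does strictly better than \<open>Y\<close> (Blackwell).\<close>

definition joint_reward :: "'a set \<Rightarrow> ('x::finite \<Rightarrow> 'w::finite \<Rightarrow> real) \<Rightarrow> ('x \<Rightarrow> 'a \<Rightarrow> real) \<Rightarrow> real" where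
  "joint_reward A J u = (\<Sum>w\<in>UNIV. Max ((\<lambda>a. \<Sum>x\<in>UNIV. J x w * u x a) ` A))"

lemma max_reward_eq_joint_reward:
  assumes "\<And>x. p x \<noteq> 0"
  shows "max_reward A (\<lambda>x w. J x w / p x) p u = joint_reward A J u"
  unfolding max_reward_def joint_reward_def using assms by simp

lemma joint_reward_garbling_le:
  fixes J :: "'x::finite \<Rightarrow> 'y::finite \<Rightarrow> real" and lam :: "'y \<Rightarrow> 'z::finite \<Rightarrow> real"
  assumes A: "finite A" "A \<noteq> {}"
    and lam_nonneg: "\<And>y z. lam y z \<ge> 0"
    and lam_sum: "\<And>y. (\<Sum>z\<in>UNIV. lam y z) = 1 \<or> (\<forall>x. J x y = 0)"
  shows "joint_reward A (\<lambda>x z. \<Sum>y\<in>UNIV. J x y * lam y z) u \<le> joint_reward A J u"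
proof -
  define M where "M y = Max ((\<lambda>a. \<Sum>x\<in>UNIV. J x y * u x a) ` A)" for y
  have "(\<Sum>x\<in>UNIV. (\<Sum>y\<in>UNIV. J x y * lam y z) * u x a) \<le> (\<Sum>y\<in>UNIV. lam y z * M y)"
    if "a \<in> A" for a z
  proof -
    have "(\<Sum>x\<in>UNIV. (\<Sum>y\<in>UNIV. J x y * lam y z) * u x a) = (\<Sum>y\<in>UNIV. lam y z * (\<Sum>x\<in>UNIV. J x y * u x a))"
      by (simp add: sum_distrib_left sum_distrib_right mult_ac) (rule sum.swap)
    also have "\<dots> \<le> (\<Sum>y\<in>UNIV. lam y z * M y)"
      by (intro sum_mono mult_left_mono lam_nonneg) (auto simp: M_def A that)
    finally show ?thesis .
  qed
  then have "joint_reward A (\<lambda>x z. \<Sum>y\<in>UNIV. J x y * lam y z) u \<le> (\<Sum>z\<in>UNIV. \<Sum>y\<in>UNIV. lam y z * M y)"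
    unfolding joint_reward_def using A by (intro sum_mono) (simp add: Max_le_iff)
  also have "\<dots> = (\<Sum>y\<in>UNIV. (\<Sum>z\<in>UNIV. lam y z) * M y)"
    by (subst sum.swap) (simp add: sum_distrib_right)
  also have "\<dots> = (\<Sum>y\<in>UNIV. M y)"
  proof (intro sum.cong refl)
    fix y
    have "M y = 0" if "\<forall>x. J x y = 0"
      using A that by (simp add: M_def image_constant_conv)
    then show "(\<Sum>z\<in>UNIV. lam y z) * M y = M y"
      using lam_sum[of y] by auto
  qed
  finally show ?thesis by (simp add: joint_reward_def M_def)
qed

lemma joint_reward_le_add_l1_dist:
  fixes J J' :: "'x::finite \<Rightarrow> 'w::finite \<Rightarrow> real"
  assumes A: "finite A" "A \<noteq> {}"
    and U: "\<And>x a. a \<in> A \<Longrightarrow> \<bar>u x a\<bar> \<le> U"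
  shows "joint_reward A J u \<le> joint_reward A J' u + U * (\<Sum>w\<in>UNIV. \<Sum>x\<in>UNIV. \<bar>J x w - J' x w\<bar>)"
proof -
  have "(\<Sum>x\<in>UNIV. J x w * u x a)
      \<le> Max ((\<lambda>a. \<Sum>x\<in>UNIV. J' x w * u x a) ` A) + U * (\<Sum>x\<in>UNIV. \<bar>J x w - J' x w\<bar>)"
    if a: "a \<in> A" for a w
  proof -
    have "(\<Sum>x\<in>UNIV. J x w * u x a) = (\<Sum>x\<in>UNIV. J' x w * u x a) + (\<Sum>x\<in>UNIV. (J x w - J' x w) * u x a)"
      by (simp add: sum.distrib[symmetric] algebra_simps)
    also have "(\<Sum>x\<in>UNIV. (J x w - J' x w) * u x a) \<le> (\<Sum>x\<in>UNIV. \<bar>J x w - J' x w\<bar> * U)"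
    proof (intro sum_mono)
      fix x
      have "(J x w - J' x w) * u x a \<le> \<bar>J x w - J' x w\<bar> * \<bar>u x a\<bar>"
        by (metis abs_ge_self abs_mult)
      also have "\<dots> \<le> \<bar>J x w - J' x w\<bar> * U"
        by (intro mult_left_mono U a) simp
      finally show "(J x w - J' x w) * u x a \<le> \<bar>J x w - J' x w\<bar> * U" .
    qed
    also have "(\<Sum>x\<in>UNIV. J' x w * u x a) \<le> Max ((\<lambda>a. \<Sum>x\<in>UNIV. J' x w * u x a) ` A)"
      using A a by (intro Max_ge) auto
    finally show ?thesis
      by (simp add: sum_distrib_left mult_ac)
  qed
  then have "joint_reward A J u
      \<le> (\<Sum>w\<in>UNIV. Max ((\<lambda>a. \<Sum>x\<in>UNIV. J' x w * u x a) ` A) + U * (\<Sum>x\<in>UNIV. \<bar>J x w - J' x w\<bar>))"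
    unfolding joint_reward_def using A by (intro sum_mono) (simp add: Max_le_iff)
  then show ?thesis
    by (simp add: joint_reward_def sum.distrib sum_distrib_left)
qed

definition rel_entropy :: "'i set \<Rightarrow> ('i \<Rightarrow> real) \<Rightarrow> ('i \<Rightarrow> real) \<Rightarrow> real" where
  "rel_entropy S q r = (\<Sum>i\<in>S. if q i = 0 then 0 else q i * log 2 (q i / r i))"

lemma hellinger_term_le_ln:
  fixes q r :: real
  assumes "q > 0" "r > 0"
  shows "2 * (q - sqrt (q * r)) \<le> q * ln (q / r)"
proof -
  define s where "s = sqrt (r / q)"
  have s_pos: "s > 0" and "q / r = 1 / s\<^sup>2"
    using assms by (simp_all add: s_def)
  then have "ln (q / r) = - 2 * ln s"
    by (simp add: ln_div ln_realpow)
  with ln_le_minus_one[OF s_pos] have "2 * (1 - s) \<le> ln (q / r)"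
    by simp
  then have "q * (2 * (1 - s)) \<le> q * ln (q / r)"
    using assms by (intro mult_left_mono) auto
  moreover have "q * s = sqrt (q * r)"
    using assms by (simp add: s_def real_sqrt_divide real_sqrt_mult field_simps)
  ultimately show ?thesis
    by (simp add: algebra_simps)
qed

lemma hellinger_le_rel_entropy:
  assumes nonneg: "\<And>i. i \<in> S \<Longrightarrow> q i \<ge> 0" "\<And>i. i \<in> S \<Longrightarrow> r i \<ge> 0"
    and abs_cont: "\<And>i. i \<in> S \<Longrightarrow> q i > 0 \<Longrightarrow> r i > 0"
    and mass: "sum r S \<le> sum q S"
  shows "(\<Sum>i\<in>S. (sqrt (q i) - sqrt (r i))\<^sup>2) \<le> ln 2 * rel_entropy S q r"
proof -
  have "(\<Sum>i\<in>S. (sqrt (q i) - sqrt (r i))\<^sup>2) = sum q S + sum r S - 2 * (\<Sum>i\<in>S. sqrt (q i * r i))"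
    using nonneg by (simp add: power2_diff sum.distrib sum_subtractf sum_distrib_left real_sqrt_mult mult.assoc)
  also have "\<dots> \<le> (\<Sum>i\<in>S. 2 * (q i - sqrt (q i * r i)))"
    using mass by (simp add: sum_subtractf sum_distrib_left[symmetric])
  also have "\<dots> \<le> (\<Sum>i\<in>S. if q i = 0 then 0 else q i * ln (q i / r i))"
  proof (intro sum_mono)
    fix i assume i: "i \<in> S"
    show "2 * (q i - sqrt (q i * r i)) \<le> (if q i = 0 then 0 else q i * ln (q i / r i))"
      using hellinger_term_le_ln[of "q i" "r i"] nonneg(1)[OF i] abs_cont[OF i] by auto
  qed
  also have "\<dots> = ln 2 * rel_entropy S q r"
    unfolding rel_entropy_def sum_distrib_left by (intro sum.cong) (simp_all add: log_def)
  finally show ?thesis .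
qed

lemma l1_dist_le_hellinger:
  assumes nonneg: "\<And>i. i \<in> S \<Longrightarrow> q i \<ge> 0" "\<And>i. i \<in> S \<Longrightarrow> r i \<ge> 0"
    and mass: "sum q S \<le> 1" "sum r S \<le> 1"
  shows "(\<Sum>i\<in>S. \<bar>q i - r i\<bar>) \<le> 2 * sqrt (\<Sum>i\<in>S. (sqrt (q i) - sqrt (r i))\<^sup>2)"
proof -
  have "(\<Sum>i\<in>S. \<bar>q i - r i\<bar>) = (\<Sum>i\<in>S. \<bar>sqrt (q i) - sqrt (r i)\<bar> * \<bar>sqrt (q i) + sqrt (r i)\<bar>)"
  proof (intro sum.cong refl)
    fix i assume "i \<in> S"
    then have "q i - r i = (sqrt (q i) - sqrt (r i)) * (sqrt (q i) + sqrt (r i))"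
      using nonneg by (simp add: algebra_simps)
    then show "\<bar>q i - r i\<bar> = \<bar>sqrt (q i) - sqrt (r i)\<bar> * \<bar>sqrt (q i) + sqrt (r i)\<bar>"
      by (simp add: abs_mult)
  qed
  also have "\<dots> \<le> L2_set (\<lambda>i. sqrt (q i) - sqrt (r i)) S * L2_set (\<lambda>i. sqrt (q i) + sqrt (r i)) S"
    by (rule L2_set_mult_ineq)
  also have "L2_set (\<lambda>i. sqrt (q i) + sqrt (r i)) S \<le> 2"
  proof -
    have "(\<Sum>i\<in>S. (sqrt (q i) + sqrt (r i))\<^sup>2) \<le> (\<Sum>i\<in>S. 2 * (q i + r i))"
    proof (intro sum_mono)
      fix i assume "i \<in> S"
      then show "(sqrt (q i) + sqrt (r i))\<^sup>2 \<le> 2 * (q i + r i)"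
        using nonneg arith_geo_mean_sqrt[of "q i" "r i"]
        by (simp add: power2_sum real_sqrt_mult)
    qed
    also have "\<dots> \<le> 4"
      using mass by (simp add: sum.distrib sum_distrib_left[symmetric])
    finally show ?thesis
      unfolding L2_set_def by (simp add: real_sqrt_le_iff[of _ 4, simplified])
  qed
  then have "L2_set (\<lambda>i. sqrt (q i) - sqrt (r i)) S * L2_set (\<lambda>i. sqrt (q i) + sqrt (r i)) S
      \<le> L2_set (\<lambda>i. sqrt (q i) - sqrt (r i)) S * 2"
    by (intro mult_left_mono L2_set_nonneg)
  finally show ?thesis
    by (simp add: L2_set_def mult.commute)
qed

lemma
  assumes nonneg: "\<And>i. i \<in> S \<Longrightarrow> q i \<ge> 0" "\<And>i. i \<in> S \<Longrightarrow> r i \<ge> 0"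
    and abs_cont: "\<And>i. i \<in> S \<Longrightarrow> q i > 0 \<Longrightarrow> r i > 0"
    and mass: "sum q S = 1" "sum r S \<le> 1"
  shows rel_entropy_nonneg: "rel_entropy S q r \<ge> 0"
    and l1_dist_le_rel_entropy: "(\<Sum>i\<in>S. \<bar>q i - r i\<bar>) \<le> 2 * sqrt (ln 2 * rel_entropy S q r)"
proof -
  have hellinger: "(\<Sum>i\<in>S. (sqrt (q i) - sqrt (r i))\<^sup>2) \<le> ln 2 * rel_entropy S q r"
    by (rule hellinger_le_rel_entropy) (use nonneg abs_cont mass in auto)
  moreover have "0 \<le> (\<Sum>i\<in>S. (sqrt (q i) - sqrt (r i))\<^sup>2)"
    by (simp add: sum_nonneg)
  ultimately have "0 \<le> ln 2 * rel_entropy S q r"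
    by linarith
  then show "rel_entropy S q r \<ge> 0"
    by (simp add: zero_le_mult_iff)
  have "(\<Sum>i\<in>S. \<bar>q i - r i\<bar>) \<le> 2 * sqrt (\<Sum>i\<in>S. (sqrt (q i) - sqrt (r i))\<^sup>2)"
    by (rule l1_dist_le_hellinger) (use nonneg mass in auto)
  also have "\<dots> \<le> 2 * sqrt (ln 2 * rel_entropy S q r)"
    using hellinger by simp
  finally show "(\<Sum>i\<in>S. \<bar>q i - r i\<bar>) \<le> 2 * sqrt (ln 2 * rel_entropy S q r)" .
qed

lemma rel_entropy_self: "rel_entropy S q q = 0"
  unfolding rel_entropy_def by (intro sum.neutral) simp

lemma sum_UNIV_triple:
  fixes f :: "'x::finite \<Rightarrow> 'y::finite \<Rightarrow> 'z::finite \<Rightarrow> 'a::comm_monoid_add"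
  shows "(\<Sum>x\<in>UNIV. \<Sum>y\<in>UNIV. \<Sum>z\<in>UNIV. f x y z) = (\<Sum>(x, y, z)\<in>UNIV. f x y z)"
  by (simp add: UNIV_Times_UNIV[symmetric] sum.cartesian_product del: UNIV_Times_UNIV)

lemma margY_eq_sum_margXY: "margY Q y = (\<Sum>x\<in>UNIV. margXY Q x y)"
  by (simp add: margY_def margXY_def)

lemma margY_eq_sum_margYZ: "margY Q y = (\<Sum>z\<in>UNIV. margYZ Q y z)"
  unfolding margY_def margYZ_def by (rule sum.swap)

lemma
  assumes "is_dist Q"
  shows margXY_nonneg: "margXY Q x y \<ge> 0"
    and margYZ_nonneg: "margYZ Q y z \<ge> 0"
    and margY_nonneg: "margY Q y \<ge> 0"
  using assms unfolding is_dist_def margXY_def margYZ_def margY_def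
  by (auto intro!: sum_nonneg)

lemma
  assumes Q: "is_dist Q" and pos: "Q x y z > 0"
  shows margXY_pos: "margXY Q x y > 0"
    and margYZ_pos: "margYZ Q y z > 0"
    and margY_pos: "margY Q y > 0"
proof -
  have nonneg: "\<And>x y z. Q x y z \<ge> 0"
    using Q by (simp add: is_dist_def)
  have "Q x y z \<le> margXY Q x y"
    unfolding margXY_def by (rule member_le_sum) (auto simp: nonneg)
  then show XY: "margXY Q x y > 0"
    using pos by simp
  have "Q x y z \<le> margYZ Q y z"
    unfolding margYZ_def by (rule member_le_sum[where f = "\<lambda>x. Q x y z"]) (auto simp: nonneg)
  then show "margYZ Q y z > 0"
    using pos by simp
  have "margXY Q x y \<le> margY Q y"
    unfolding margY_eq_sum_margXY by (rule member_le_sum) (auto intro: margXY_nonneg[OF Q])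
  then show "margY Q y > 0"
    using XY by simp
qed

text \<open>The distribution of the Markov chain \<open>X - Y - Z\<close> with the same \<open>(X,Y)\<close> and \<open>(Y,Z)\<close>
  marginals as \<open>Q\<close>.\<close>
definition markov_approx :: "('x::finite \<Rightarrow> 'y::finite \<Rightarrow> 'z::finite \<Rightarrow> real) \<Rightarrow> 'x \<Rightarrow> 'y \<Rightarrow> 'z \<Rightarrow> real" where
  "markov_approx Q x y z = margXY Q x y * margYZ Q y z / margY Q y"

lemma markov_approx_nonneg: "is_dist Q \<Longrightarrow> markov_approx Q x y z \<ge> 0"
  by (simp add: markov_approx_def margXY_nonneg margYZ_nonneg margY_nonneg)

lemma markov_approx_pos: "is_dist Q \<Longrightarrow> Q x y z > 0 \<Longrightarrow> markov_approx Q x y z > 0"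
  by (simp add: markov_approx_def margXY_pos margYZ_pos margY_pos)

lemma sum_markov_approx:
  assumes "is_dist Q"
  shows "(\<Sum>x\<in>UNIV. \<Sum>y\<in>UNIV. \<Sum>z\<in>UNIV. markov_approx Q x y z) = 1"
proof -
  have "(\<Sum>x\<in>UNIV. \<Sum>y\<in>UNIV. \<Sum>z\<in>UNIV. markov_approx Q x y z)
      = (\<Sum>y\<in>UNIV. (\<Sum>x\<in>UNIV. margXY Q x y) * (\<Sum>z\<in>UNIV. margYZ Q y z) / margY Q y)"
    unfolding markov_approx_def
    by (subst sum.swap) (intro sum.cong refl, simp add: sum_product sum_divide_distrib)
  also have "\<dots> = (\<Sum>y\<in>UNIV. margY Q y)"
    by (simp add: margY_eq_sum_margXY[symmetric] margY_eq_sum_margYZ[symmetric])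
  also have "\<dots> = 1"
    using assms unfolding is_dist_def margY_def by (subst sum.swap) simp
  finally show ?thesis .
qed

lemma cond_MI_eq_rel_entropy:
  "cond_MI Q = rel_entropy UNIV (\<lambda>(x, y, z). Q x y z) (\<lambda>(x, y, z). markov_approx Q x y z)"
  unfolding cond_MI_def rel_entropy_def markov_approx_def sum_UNIV_triple
  by (intro sum.cong refl) (simp add: divide_divide_eq_right split: prod.split)

lemma
  fixes Q :: "'x::finite \<Rightarrow> 'y::finite \<Rightarrow> 'z::finite \<Rightarrow> real"
  assumes Q: "is_dist Q"
  shows cond_MI_nonneg: "cond_MI Q \<ge> 0"
    and l1_dist_markov_approx_le_cond_MI:
      "(\<Sum>x\<in>UNIV. \<Sum>y\<in>UNIV. \<Sum>z\<in>UNIV. \<bar>Q x y z - markov_approx Q x y z\<bar>) \<le> 2 * sqrt (ln 2 * cond_MI Q)"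
proof -
  let ?q = "\<lambda>(x, y, z). Q x y z" and ?r = "\<lambda>(x, y, z). markov_approx Q x y z"
  have "\<And>i. ?q i \<ge> 0" "\<And>i. ?r i \<ge> 0"
    "\<And>i. ?q i > 0 \<Longrightarrow> ?r i > 0" "sum ?q UNIV = 1" "sum ?r UNIV \<le> 1"
    using Q sum_markov_approx[OF Q] markov_approx_nonneg[OF Q] markov_approx_pos[OF Q]
    by (auto simp: is_dist_def sum_UNIV_triple)
  note divergence = rel_entropy_nonneg[OF this] l1_dist_le_rel_entropy[OF this]
  then show "cond_MI Q \<ge> 0"
    by (simp add: cond_MI_eq_rel_entropy)
  from divergence(2) show "(\<Sum>x\<in>UNIV. \<Sum>y\<in>UNIV. \<Sum>z\<in>UNIV. \<bar>Q x y z - markov_approx Q x y z\<bar>) \<le> 2 * sqrt (ln 2 * cond_MI Q)"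
    by (simp add: cond_MI_eq_rel_entropy sum_UNIV_triple case_prod_beta)
qed

lemma markov_approx_garbling:
  fixes a :: "'x::finite \<Rightarrow> 'y::finite \<Rightarrow> real" and lam :: "'y \<Rightarrow> 'z::finite \<Rightarrow> real"
  assumes a_nonneg: "\<And>x y. a x y \<ge> 0" and lam_sum: "\<And>y. (\<Sum>z\<in>UNIV. lam y z) = 1"
  shows "markov_approx (\<lambda>x y z. a x y * lam y z) = (\<lambda>x y z. a x y * lam y z)"
proof (intro ext)
  fix x y z
  let ?Q = "\<lambda>x y z. a x y * lam y z" and ?s = "\<Sum>x\<in>UNIV. a x y"
  have "margXY ?Q x y = a x y" "margYZ ?Q y z = ?s * lam y z" "margY ?Q y = ?s"
    by (simp_all add: margXY_def margYZ_def margY_def sum_distrib_left[symmetric] sum_distrib_right lam_sum)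
  moreover have "a x y = 0" if "?s = 0"
    using that a_nonneg by (simp add: sum_nonneg_eq_0_iff)
  ultimately show "markov_approx ?Q x y z = ?Q x y z"
    by (cases "?s = 0") (simp_all add: markov_approx_def)
qed

lemma UI_tilde_eq_0_of_garbling:
  fixes P :: "'x::finite \<Rightarrow> 'y::finite \<Rightarrow> 'z::finite \<Rightarrow> real" and lam :: "'y \<Rightarrow> 'z \<Rightarrow> real"
  assumes P: "is_dist P"
    and lam_nonneg: "\<And>y z. lam y z \<ge> 0" and lam_sum: "\<And>y. (\<Sum>z\<in>UNIV. lam y z) = 1"
    and garbling: "\<And>x z. (\<Sum>y\<in>UNIV. margXY P x y * lam y z) = margXZ P x z"
  shows "UI_tilde P = 0"
proof -
  define Q where "Q x y z = margXY P x y * lam y z" for x y z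
  have XY: "margXY Q = margXY P"
    by (intro ext) (simp add: margXY_def Q_def sum_distrib_left[symmetric] lam_sum)
  have XZ: "margXZ Q = margXZ P"
    by (intro ext) (simp add: margXZ_def Q_def garbling)
  have "(\<Sum>x\<in>UNIV. \<Sum>y\<in>UNIV. \<Sum>z\<in>UNIV. Q x y z) = (\<Sum>x\<in>UNIV. \<Sum>y\<in>UNIV. margXY P x y)"
    by (simp add: XY[symmetric] margXY_def)
  moreover have "\<forall>x y z. Q x y z \<ge> 0"
    by (simp add: Q_def lam_nonneg margXY_nonneg[OF P])
  ultimately have "is_dist Q"
    using P by (simp add: is_dist_def margXY_def)
  with XY XZ have Q_in: "Q \<in> DeltaP P"
    by (simp add: DeltaP_def)
  have "markov_approx Q = Q"
    unfolding Q_def by (rule markov_approx_garbling[OF margXY_nonneg[OF P] lam_sum])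
  then have "cond_MI Q = 0"
    by (simp add: cond_MI_eq_rel_entropy rel_entropy_self)
  then have "0 \<in> cond_MI ` DeltaP P"
    using Q_in by force
  then show ?thesis
    unfolding UI_tilde_def
    by (rule cInf_eq_minimum) (auto simp: DeltaP_def cond_MI_nonneg)
qed

lemma joint_reward_gap_le_cond_MI:
  fixes P Q :: "'x::finite \<Rightarrow> 'y::finite \<Rightarrow> 'z::finite \<Rightarrow> real"
  assumes Q_in: "Q \<in> DeltaP P" and A: "finite A" "A \<noteq> {}"
    and U: "\<And>x a. a \<in> A \<Longrightarrow> \<bar>u x a\<bar> \<le> U"
  shows "joint_reward A (margXZ P) u \<le> joint_reward A (margXY P) u + 2 * U * sqrt (ln 2 * cond_MI Q)"
proof -
  have Q: "is_dist Q" and XY: "margXY Q = margXY P" and XZ: "margXZ Q = margXZ P"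
    using Q_in by (auto simp: DeltaP_def)
  define lam where "lam y z = margYZ Q y z / margY Q y" for y z
  let ?J = "\<lambda>x z. \<Sum>y\<in>UNIV. margXY P x y * lam y z"
  have "joint_reward A ?J u \<le> joint_reward A (margXY P) u"
  proof (rule joint_reward_garbling_le[OF A])
    show "lam y z \<ge> 0" for y z
      by (simp add: lam_def margYZ_nonneg[OF Q] margY_nonneg[OF Q])
    show "(\<Sum>z\<in>UNIV. lam y z) = 1 \<or> (\<forall>x. margXY P x y = 0)" for y
    proof (cases "margY Q y = 0")
      case True
      then show ?thesis
        using margXY_nonneg[OF Q] by (simp add: margY_eq_sum_margXY sum_nonneg_eq_0_iff XY)
    qed (simp add: lam_def sum_divide_distrib[symmetric] margY_eq_sum_margYZ[symmetric])
  qed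
  moreover have "joint_reward A (margXZ P) u \<le> joint_reward A ?J u + U * (\<Sum>z\<in>UNIV. \<Sum>x\<in>UNIV. \<bar>margXZ P x z - ?J x z\<bar>)"
    by (rule joint_reward_le_add_l1_dist[OF A U])
  moreover have "U * (\<Sum>z\<in>UNIV. \<Sum>x\<in>UNIV. \<bar>margXZ P x z - ?J x z\<bar>) \<le> U * (2 * sqrt (ln 2 * cond_MI Q))"
  proof (rule mult_left_mono)
    have "\<bar>margXZ P x z - ?J x z\<bar> \<le> (\<Sum>y\<in>UNIV. \<bar>Q x y z - markov_approx Q x y z\<bar>)" for x z
    proof -
      have "margXZ P x z - ?J x z = (\<Sum>y\<in>UNIV. Q x y z - markov_approx Q x y z)"
        by (simp add: XZ[symmetric] XY[symmetric] margXZ_def markov_approx_def lam_def sum_subtractf)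
      then show ?thesis
        by (simp add: sum_abs)
    qed
    then have "(\<Sum>z\<in>UNIV. \<Sum>x\<in>UNIV. \<bar>margXZ P x z - ?J x z\<bar>)
        \<le> (\<Sum>z\<in>UNIV. \<Sum>x\<in>UNIV. \<Sum>y\<in>UNIV. \<bar>Q x y z - markov_approx Q x y z\<bar>)"
      by (intro sum_mono)
    also have "\<dots> = (\<Sum>x\<in>UNIV. \<Sum>y\<in>UNIV. \<Sum>z\<in>UNIV. \<bar>Q x y z - markov_approx Q x y z\<bar>)"
      by (subst sum.swap) (rule sum.cong[OF refl], rule sum.swap)
    also have "\<dots> \<le> 2 * sqrt (ln 2 * cond_MI Q)"
      by (rule l1_dist_markov_approx_le_cond_MI[OF Q])
    finally show "(\<Sum>z\<in>UNIV. \<Sum>x\<in>UNIV. \<bar>margXZ P x z - ?J x z\<bar>) \<le> 2 * sqrt (ln 2 * cond_MI Q)" .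
    obtain a where "a \<in> A"
      using A by blast
    then show "U \<ge> 0"
      using U abs_ge_zero order_trans by blast
  qed
  ultimately show ?thesis
    by (simp add: mult.assoc)
qed

lemma joint_reward_le_of_UI_tilde_eq_0:
  fixes P :: "'x::finite \<Rightarrow> 'y::finite \<Rightarrow> 'z::finite \<Rightarrow> real"
  assumes P: "is_dist P" and UI: "UI_tilde P = 0" and A: "finite A" "A \<noteq> {}"
  shows "joint_reward A (margXZ P) u \<le> joint_reward A (margXY P) u"
proof (rule ccontr)
  define \<delta> where "\<delta> = joint_reward A (margXZ P) u - joint_reward A (margXY P) u"
  define U where "U = (\<Sum>x\<in>UNIV. \<Sum>a\<in>A. \<bar>u x a\<bar>)"
  assume "\<not> ?thesis"
  then have \<delta>_pos: "\<delta> > 0"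
    by (simp add: \<delta>_def)
  have U: "\<bar>u x a\<bar> \<le> U" if "a \<in> A" for x a
  proof -
    have "\<bar>u x a\<bar> \<le> (\<Sum>a\<in>A. \<bar>u x a\<bar>)"
      using A that by (intro member_le_sum) auto
    also have "\<dots> \<le> U"
      unfolding U_def by (rule member_le_sum[where f = "\<lambda>x. \<Sum>a\<in>A. \<bar>u x a\<bar>"]) (auto intro: sum_nonneg)
    finally show ?thesis .
  qed
  have gap: "\<delta> \<le> 2 * U * sqrt (ln 2 * cond_MI Q)" if "Q \<in> DeltaP P" for Q
  proof -
    have "joint_reward A (margXZ P) u \<le> joint_reward A (margXY P) u + 2 * U * sqrt (ln 2 * cond_MI Q)"
      by (rule joint_reward_gap_le_cond_MI[OF that A]) (rule U)
    then show ?thesis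
      by (simp add: \<delta>_def)
  qed
  have P_in: "P \<in> DeltaP P"
    using P by (simp add: DeltaP_def)
  have "U \<ge> 0"
    unfolding U_def by (intro sum_nonneg) auto
  moreover have "U \<noteq> 0"
    using gap[OF P_in] \<delta>_pos by auto
  ultimately have U_pos: "U > 0"
    by simp
  have "(\<delta> / (2 * U))\<^sup>2 / ln 2 \<le> cond_MI Q" if "Q \<in> DeltaP P" for Q
  proof -
    have "cond_MI Q \<ge> 0"
      using that by (simp add: DeltaP_def cond_MI_nonneg)
    moreover have "\<delta> / (2 * U) \<le> sqrt (ln 2 * cond_MI Q)"
      using gap[OF that] U_pos by (simp add: divide_le_eq mult_ac)
    ultimately have "(\<delta> / (2 * U))\<^sup>2 \<le> (sqrt (ln 2 * cond_MI Q))\<^sup>2"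
      using \<delta>_pos U_pos by (intro power_mono) auto
    also have "\<dots> = ln 2 * cond_MI Q"
      using \<open>cond_MI Q \<ge> 0\<close> by simp
    finally have "(\<delta> / (2 * U))\<^sup>2 \<le> ln 2 * cond_MI Q" .
    then show ?thesis
      by (simp add: divide_le_eq mult.commute)
  qed
  then have "(\<delta> / (2 * U))\<^sup>2 / ln 2 \<le> UI_tilde P"
    unfolding UI_tilde_def using P_in by (intro cInf_greatest) auto
  moreover have "(\<delta> / (2 * U))\<^sup>2 / ln 2 > 0"
    using \<delta>_pos U_pos by (intro divide_pos_pos) auto
  ultimately show False
    using UI by simp
qed

definition det_garbling :: "('x::finite \<Rightarrow> 'y::finite \<Rightarrow> real) \<Rightarrow> ('y \<Rightarrow> 'z::finite) \<Rightarrow> real^('x \<times> 'z)" where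
  "det_garbling J f = (\<chi> p. \<Sum>y\<in>UNIV. if f y = snd p then J (fst p) y else 0)"

lemma det_garbling_nth: "det_garbling J f $ (x, z) = (\<Sum>y\<in>UNIV. if f y = z then J x y else 0)"
  by (simp only: det_garbling_def vec_lambda_beta fst_conv snd_conv)

lemma sum_UNIV_pair:
  fixes h :: "'a::finite \<times> 'b::finite \<Rightarrow> 'c::comm_monoid_add"
  shows "(\<Sum>p\<in>UNIV. h p) = (\<Sum>x\<in>UNIV. \<Sum>z\<in>UNIV. h (x, z))"
  by (simp add: UNIV_Times_UNIV[symmetric] sum.cartesian_product del: UNIV_Times_UNIV)

lemma sum_mult_sum_fibres:
  fixes a :: "'y::finite \<Rightarrow> 'r::comm_semiring_1" and c :: "'z::finite \<Rightarrow> 'r"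
  shows "(\<Sum>z\<in>UNIV. c z * (\<Sum>y\<in>UNIV. if f y = z then a y else 0)) = (\<Sum>y\<in>UNIV. a y * c (f y))"
proof -
  have "(\<Sum>z\<in>UNIV. c z * (\<Sum>y\<in>UNIV. if f y = z then a y else 0))
      = (\<Sum>y\<in>UNIV. \<Sum>z\<in>UNIV. if f y = z then a y * c z else 0)"
    unfolding sum_distrib_left by (subst sum.swap) (intro sum.cong refl, simp add: mult.commute)
  also have "\<dots> = (\<Sum>y\<in>UNIV. a y * c (f y))"
    by simp
  finally show ?thesis .
qed

lemma inner_det_garbling:
  "w \<bullet> det_garbling J f = (\<Sum>y\<in>UNIV. \<Sum>x\<in>UNIV. J x y * w $ (x, f y))"
proof -
  have "w \<bullet> det_garbling J f = (\<Sum>x\<in>UNIV. \<Sum>z\<in>UNIV. w $ (x, z) * det_garbling J f $ (x, z))"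
    unfolding inner_vec_def sum_UNIV_pair by simp
  also have "\<dots> = (\<Sum>x\<in>UNIV. \<Sum>y\<in>UNIV. J x y * w $ (x, f y))"
    unfolding det_garbling_nth sum_mult_sum_fibres ..
  also have "\<dots> = (\<Sum>y\<in>UNIV. \<Sum>x\<in>UNIV. J x y * w $ (x, f y))"
    by (rule sum.swap)
  finally show ?thesis .
qed

lemma garbling_of_mem_convex_hull:
  fixes J :: "'x::finite \<Rightarrow> 'y::finite \<Rightarrow> real" and m :: "real^('x \<times> 'z::finite)"
  assumes "m \<in> convex hull (range (det_garbling J))"
  obtains lam :: "'y \<Rightarrow> 'z \<Rightarrow> real"
  where "\<And>y z. lam y z \<ge> 0" "\<And>y. (\<Sum>z\<in>UNIV. lam y z) = 1"
    "\<And>x z. (\<Sum>y\<in>UNIV. J x y * lam y z) = m $ (x, z)"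
proof -
  let ?D = "range (det_garbling J) :: (real^('x \<times> 'z)) set"
  have "finite ?D"
    by simp
  obtain w where w_nonneg: "\<forall>v\<in>?D. 0 \<le> w v" and w_sum: "sum w ?D = 1"
    and w_comb: "(\<Sum>v\<in>?D. w v *\<^sub>R v) = m"
    using assms unfolding convex_hull_finite[OF \<open>finite ?D\<close>] by blast
  define g :: "real^('x \<times> 'z) \<Rightarrow> 'y \<Rightarrow> 'z" where "g = inv (det_garbling J)"
  have g: "det_garbling J (g v) = v" if "v \<in> ?D" for v
    unfolding g_def using that by (rule f_inv_into_f)
  define lam where "lam y z = (\<Sum>v\<in>?D. if g v y = z then w v else 0)" for y z
  show ?thesis
  proof (rule that)
    show "lam y z \<ge> 0" for y z
      using w_nonneg by (auto simp: lam_def intro!: sum_nonneg)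
    show "(\<Sum>z\<in>UNIV. lam y z) = 1" for y
      unfolding lam_def by (subst sum.swap) (simp add: w_sum)
    show "(\<Sum>y\<in>UNIV. J x y * lam y z) = m $ (x, z)" for x z
    proof -
      have "(\<Sum>y\<in>UNIV. J x y * lam y z) = (\<Sum>y\<in>UNIV. \<Sum>v\<in>?D. if g v y = z then w v * J x y else 0)"
        unfolding lam_def sum_distrib_left by (intro sum.cong refl) (simp add: mult.commute)
      also have "\<dots> = (\<Sum>v\<in>?D. w v * det_garbling J (g v) $ (x, z))"
        unfolding det_garbling_nth sum_distrib_left by (subst sum.swap) (simp add: if_distrib cong: if_cong)
      also have "\<dots> = (\<Sum>v\<in>?D. w v * v $ (x, z))"
        by (intro sum.cong refl) (simp add: g)
      also have "\<dots> = (\<Sum>v\<in>?D. w v *\<^sub>R v) $ (x, z)"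
        by simp
      also have "\<dots> = m $ (x, z)"
        by (simp only: w_comb)
      finally show ?thesis .
    qed
  qed
qed

lemma joint_reward_UNIV_eq_det_garbling:
  fixes J :: "'x::finite \<Rightarrow> 'y::finite \<Rightarrow> real" and v :: "'x \<Rightarrow> 'z::finite \<Rightarrow> real"
  obtains f :: "'y \<Rightarrow> 'z" where "joint_reward UNIV J v = (\<chi> p. v (fst p) (snd p)) \<bullet> det_garbling J f"
proof -
  have "\<forall>y. \<exists>z. Max ((\<lambda>a. \<Sum>x\<in>UNIV. J x y * v x a) ` UNIV) = (\<Sum>x\<in>UNIV. J x y * v x z)"
    using Max_in[of "(\<lambda>a. \<Sum>x\<in>UNIV. J x y * v x a) ` UNIV" for y] by fastforce
  then obtain f where f: "\<And>y. Max ((\<lambda>a. \<Sum>x\<in>UNIV. J x y * v x a) ` UNIV) = (\<Sum>x\<in>UNIV. J x y * v x (f y))"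
    by metis
  show ?thesis
    by (rule that[of f]) (simp add: joint_reward_def f inner_det_garbling)
qed

lemma inner_le_joint_reward_UNIV:
  fixes K v :: "'x::finite \<Rightarrow> 'z::finite \<Rightarrow> real"
  shows "(\<chi> p. v (fst p) (snd p)) \<bullet> (\<chi> p. K (fst p) (snd p)) \<le> joint_reward UNIV K v"
proof -
  have "(\<chi> p. v (fst p) (snd p)) \<bullet> (\<chi> p. K (fst p) (snd p)) = (\<Sum>z\<in>UNIV. \<Sum>x\<in>UNIV. K x z * v x z)"
    unfolding inner_vec_def sum_UNIV_pair by (subst sum.swap) (simp add: mult.commute)
  also have "\<dots> \<le> joint_reward UNIV K v"
    unfolding joint_reward_def by (intro sum_mono Max_ge) auto
  finally show ?thesis .
qed

lemma joint_reward_separation: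
  fixes J :: "'x::finite \<Rightarrow> 'y::finite \<Rightarrow> real" and K :: "'x \<Rightarrow> 'z::finite \<Rightarrow> real"
  assumes "(\<chi> p. K (fst p) (snd p)) \<notin> convex hull (range (det_garbling J))"
  obtains v :: "'x \<Rightarrow> 'z \<Rightarrow> real" where "joint_reward UNIV J v < joint_reward UNIV K v"
proof -
  let ?S = "convex hull (range (det_garbling J))"
  have "closed ?S"
    by (intro compact_imp_closed finite_imp_compact_convex_hull) simp
  then obtain a b where a_K: "a \<bullet> (\<chi> p. K (fst p) (snd p)) < b" and a_S: "\<forall>s\<in>?S. b < a \<bullet> s"
    using separating_hyperplane_closed_point[OF convex_convex_hull _ assms] by blast
  define v where "v x z = - a $ (x, z)" for x z
  have v: "(\<chi> p. v (fst p) (snd p)) = - a"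
    by (simp add: vec_eq_iff v_def split: prod.split)
  obtain f where "joint_reward UNIV J v = - (a \<bullet> det_garbling J f)"
    using joint_reward_UNIV_eq_det_garbling[of J v] v by auto
  also have "\<dots> < - (a \<bullet> (\<chi> p. K (fst p) (snd p)))"
    using a_K a_S hull_inc[of "det_garbling J f" "range (det_garbling J)"] by force
  also have "\<dots> \<le> joint_reward UNIV K v"
    using inner_le_joint_reward_UNIV[of v K] v by simp
  finally show ?thesis
    by (rule that)
qed

lemma joint_reward_reindex_to_nat:
  fixes v :: "'x::finite \<Rightarrow> 'a::countable \<Rightarrow> real"
  shows "joint_reward (range (to_nat :: 'a \<Rightarrow> nat)) J (\<lambda>x n. v x (from_nat n)) = joint_reward UNIV J v"
  unfolding joint_reward_def by (simp add: image_image)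

lemma UI_tilde_eq_0_of_joint_reward_le:
  fixes P :: "'x::finite \<Rightarrow> 'y::finite \<Rightarrow> 'z::finite \<Rightarrow> real"
  assumes P: "is_dist P"
    and le: "\<forall>(A::nat set) u. finite A \<and> A \<noteq> {} \<longrightarrow> joint_reward A (margXZ P) u \<le> joint_reward A (margXY P) u"
  shows "UI_tilde P = 0"
proof (cases "(\<chi> p. margXZ P (fst p) (snd p)) \<in> convex hull (range (det_garbling (margXY P)))")
  case True
  then show ?thesis
  proof (rule garbling_of_mem_convex_hull)
    fix lam :: "'y \<Rightarrow> 'z \<Rightarrow> real"
    assume "\<And>y z. lam y z \<ge> 0" "\<And>y. (\<Sum>z\<in>UNIV. lam y z) = 1"
      "\<And>x z. (\<Sum>y\<in>UNIV. margXY P x y * lam y z) = (\<chi> p. margXZ P (fst p) (snd p)) $ (x, z)"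
    then show ?thesis
      by (intro UI_tilde_eq_0_of_garbling[OF P]) simp_all
  qed
next
  case False
  then obtain v :: "'x \<Rightarrow> 'z \<Rightarrow> real" where "joint_reward UNIV (margXY P) v < joint_reward UNIV (margXZ P) v"
    by (rule joint_reward_separation)
  moreover have "joint_reward (range (to_nat :: 'z \<Rightarrow> nat)) (margXZ P) (\<lambda>x n. v x (from_nat n))
      \<le> joint_reward (range (to_nat :: 'z \<Rightarrow> nat)) (margXY P) (\<lambda>x n. v x (from_nat n))"
    using le by simp
  ultimately show ?thesis
    by (simp add: joint_reward_reindex_to_nat)
qed

theorem mainTheorem4:
  fixes P :: "'x::finite \<Rightarrow> 'y::finite \<Rightarrow> 'z::finite \<Rightarrow> real"
  assumes "is_dist P"
    and "\<forall>x. margX P x > 0"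
  shows "UI_tilde P = 0 \<longleftrightarrow>
    (\<forall>(A::nat set) (u::'x \<Rightarrow> nat \<Rightarrow> real). finite A \<and> A \<noteq> {} \<longrightarrow>
       max_reward A (kappa P) (margX P) u \<ge> max_reward A (mu P) (margX P) u)"
proof -
  have "kappa P = (\<lambda>x y. margXY P x y / margX P x)" "mu P = (\<lambda>x z. margXZ P x z / margX P x)"
    by (simp_all add: fun_eq_iff kappa_def mu_def)
  moreover have "margX P x \<noteq> 0" for x
    using assms(2) by (simp add: less_imp_neq[symmetric])
  ultimately have rewards: "max_reward A (kappa P) (margX P) u = joint_reward A (margXY P) u"
    "max_reward A (mu P) (margX P) u = joint_reward A (margXZ P) u" for A and u :: "'x \<Rightarrow> nat \<Rightarrow> real"
    by (simp_all add: max_reward_eq_joint_reward)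
  show ?thesis
    unfolding rewards
  proof
    assume "UI_tilde P = 0"
    then show "\<forall>A u. finite A \<and> A \<noteq> {} \<longrightarrow> joint_reward A (margXZ P) u \<le> joint_reward A (margXY P) u"
      by (simp add: joint_reward_le_of_UI_tilde_eq_0[OF assms(1)])
  qed (rule UI_tilde_eq_0_of_joint_reward_le[OF assms(1)])
qed

end
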